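(* If $\mathrm{char}(\Bbbk)=0$ or $\mathrm{char}(\Bbbk)=p\ge5$, then $P$ is minimally generated by $f_1=3y^3-4xyz+x^4-3y^3z^5-2xy^6z^2-x^2y^4z^3$, $f_2=2y^2z-3xz^2+x^3y-2y^7z^2-xy^5z^3$, $f_3=yz^2-3x^2y^2+2x^3z-y^6z^3-2xy^4z^4$, $f_4=z^3-2xy^3+x^2yz-y^5z^4$; in particular $\mu(P)=4$.
   Context: $\Bbbk$ is a field. $\rho:\Bbbk[[x,y,z]]\to\Bbbk[[t]]$ is the $\Bbbk$-algebra morphism with $\rho(x)=t^6+t^{31}$, $\rho(y)=t^8$, $\rho(z)=t^{10}$, and $P=\ker\rho$ (the first prime of Moh, $n=3$, $\lambda=25$). $\mu(P)$ is the minimal number of generators of $P$. *)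

theory Defs
  imports "HOL-Computational_Algebra.Formal_Power_Series"
begin

text \<open>The power series ring k[[x,y,z]] is modelled as k[[x]][[y]][[z]], i.e. the type
 ('a fps) fps fps, canonically isomorphic to k[[x,y,z]].\<close>

type_synonym 'a ps3 = "'a fps fps fps"

definition psX :: "'a::comm_ring_1 ps3" where "psX = fps_const (fps_const fps_X)"
definition psY :: "'a::comm_ring_1 ps3" where "psY = fps_const fps_X"
definition psZ :: "'a::comm_ring_1 ps3" where "psZ = fps_X"

definition ps3_coeff :: "'a ps3 \<Rightarrow> nat \<Rightarrow> nat \<Rightarrow> nat \<Rightarrow> 'a" where
  "ps3_coeff F i j l = fps_nth (fps_nth (fps_nth F l) j) i"

text \<open>The continuous k-algebra morphism rho: k[[x,y,z]] -> k[[t]] with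
 x |-> t^6 + t^31, y |-> t^8, z |-> t^10.  Since the images have positive order,
 only monomials with i,j,l <= n contribute to the coefficient of t^n.\<close>

definition rho :: "'a::comm_ring_1 ps3 \<Rightarrow> 'a fps" where
  "rho F = Abs_fps (\<lambda>n. \<Sum>i\<le>n. \<Sum>j\<le>n. \<Sum>l\<le>n.
      ps3_coeff F i j l * fps_nth ((fps_X ^ 6 + fps_X ^ 31) ^ i * fps_X ^ (8 * j) * fps_X ^ (10 * l)) n)"

definition primeP :: "'a::comm_ring_1 ps3 set" where
  "primeP = {F. rho F = 0}"

definition gen_ideal :: "'b::comm_ring_1 list \<Rightarrow> 'b set" where
  "gen_ideal gs = {(\<Sum>l<length gs. h l * gs ! l) | h. True}"

definition mu :: "'b::comm_ring_1 set \<Rightarrow> nat" where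
  "mu I = (LEAST n. \<exists>gs. length gs = n \<and> I = gen_ideal gs)"

definition f1 :: "'a::comm_ring_1 ps3" where
  "f1 = 3*psY^3 - 4*psX*psY*psZ + psX^4 - 3*psY^3*psZ^5 - 2*psX*psY^6*psZ^2 - psX^2*psY^4*psZ^3"
definition f2 :: "'a::comm_ring_1 ps3" where
  "f2 = 2*psY^2*psZ - 3*psX*psZ^2 + psX^3*psY - 2*psY^7*psZ^2 - psX*psY^5*psZ^3"
definition f3 :: "'a::comm_ring_1 ps3" where
  "f3 = psY*psZ^2 - 3*psX^2*psY^2 + 2*psX^3*psZ - psY^6*psZ^3 - 2*psX*psY^4*psZ^4"
definition f4 :: "'a::comm_ring_1 ps3" where
  "f4 = psZ^3 - 2*psX*psY^3 + psX^2*psY*psZ - psY^5*psZ^4"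

end

theory Submission
  imports Defs "Jordan_Normal_Form.Determinant"
begin

text \<open>Modulo x every series is a k-linear combination of 1, y, z, y^2, yz, z^2 plus multiples of
  y^3, y^2 z, y z^2, z^3, and modulo x the generators f1, ..., f4 are unit multiples of these four cubic
  monomials (this needs 2 and 3 to be invertible). Iterating and passing to the x-adic limit writes every
  series as a combination of the fi plus a combination of b = 1, y, z, y^2 - xz, yz - x^3, z^2 - x^2 y
  with coefficients in k[[x]]. The images rho(b) have orders 0, 8, 10, 41, 43, 45, pairwise incongruent
  modulo 6 = ord rho(x), so no nonzero such combination lies in P; hence P = (f1, ..., f4).
  For minimality: P lies in the cube of the maximal ideal, and the cubic leading forms
  3y^3, 2y^2 z, y z^2, z^3 of the fi are linearly independent, so fewer than four generators cannot
  produce them.\<close>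

section \<open>Coefficient calculus in k[[x,y,z]]\<close>

definition ps3_of_coeffs :: "(nat \<Rightarrow> nat \<Rightarrow> nat \<Rightarrow> 'a) \<Rightarrow> 'a ps3" where
  "ps3_of_coeffs c = Abs_fps (\<lambda>l. Abs_fps (\<lambda>j. Abs_fps (\<lambda>i. c i j l)))"

definition ps3_const :: "'a::comm_ring_1 \<Rightarrow> 'a ps3" where
  "ps3_const c = fps_const (fps_const (fps_const c))"

definition ps3_monom :: "nat \<Rightarrow> nat \<Rightarrow> nat \<Rightarrow> 'a::comm_ring_1 ps3" where
  "ps3_monom a b c = psX ^ a * psY ^ b * psZ ^ c"

lemma ps3_coeff_of_coeffs [simp]: "ps3_coeff (ps3_of_coeffs c) i j l = c i j l"
  by (simp add: ps3_of_coeffs_def ps3_coeff_def)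

lemma ps3_eqI: "(\<And>i j l. ps3_coeff A i j l = ps3_coeff B i j l) \<Longrightarrow> A = B"
  unfolding ps3_coeff_def by (intro fps_ext) blast

lemma ps3_coeff_add [simp]: "ps3_coeff (A + B) i j l = ps3_coeff A i j l + ps3_coeff B i j l"
  and ps3_coeff_diff [simp]: "ps3_coeff (A - B) i j l = ps3_coeff A i j l - ps3_coeff B i j l"
  and ps3_coeff_0 [simp]: "ps3_coeff 0 i j l = 0"
  and ps3_coeff_1 [simp]: "ps3_coeff 1 i j l = (if i = 0 \<and> j = 0 \<and> l = 0 then 1 else 0)"
  and ps3_coeff_sum: "ps3_coeff (sum f S) i j l = (\<Sum>k\<in>S. ps3_coeff (f k) i j l)"
  by (simp_all add: ps3_coeff_def fps_sum_nth)

lemma ps3_coeff_mult: "ps3_coeff (A * B) i j l =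
  (\<Sum>p\<le>l. \<Sum>q\<le>j. \<Sum>r\<le>i. ps3_coeff A r q p * ps3_coeff B (i - r) (j - q) (l - p))"
  by (simp add: ps3_coeff_def fps_mult_nth fps_sum_nth atLeast0AtMost)

lemma ps3_coeff_const_mult [simp]: "ps3_coeff (ps3_const c * A) i j l = c * ps3_coeff A i j l"
  by (simp add: ps3_const_def ps3_coeff_def)

lemma ps3_coeff_X_mult [simp]: "ps3_coeff (psX * A) i j l = (if i = 0 then 0 else ps3_coeff A (i - 1) j l)"
  and ps3_coeff_Y_mult [simp]: "ps3_coeff (psY * A) i j l = (if j = 0 then 0 else ps3_coeff A i (j - 1) l)"
  and ps3_coeff_Z_mult [simp]: "ps3_coeff (psZ * A) i j l = (if l = 0 then 0 else ps3_coeff A i j (l - 1))"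
  by (simp_all add: ps3_coeff_def psX_def psY_def psZ_def fps_X_mult_nth)

lemma ps3_coeff_const: "ps3_coeff (ps3_const c) i j l = (if i = 0 \<and> j = 0 \<and> l = 0 then c else 0)"
  using ps3_coeff_const_mult[of c 1 i j l] by simp

lemma ps3_coeff_X_power_mult [simp]:
    "ps3_coeff (psX ^ a * A) i j l = (if a \<le> i then ps3_coeff A (i - a) j l else 0)"
  by (induction a arbitrary: i) (auto simp: mult.assoc)

lemma ps3_coeff_Y_power_mult [simp]:
    "ps3_coeff (psY ^ b * A) i j l = (if b \<le> j then ps3_coeff A i (j - b) l else 0)"
  by (induction b arbitrary: j) (auto simp: mult.assoc)

lemma ps3_coeff_Z_power_mult [simp]:
    "ps3_coeff (psZ ^ c * A) i j l = (if c \<le> l then ps3_coeff A i j (l - c) else 0)"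
  by (induction c arbitrary: l) (auto simp: mult.assoc)

lemma ps3_coeff_monom_mult: "ps3_coeff (ps3_monom a b c * A) i j l =
   (if a \<le> i \<and> b \<le> j \<and> c \<le> l then ps3_coeff A (i - a) (j - b) (l - c) else 0)"
  by (simp add: ps3_monom_def mult.assoc)

lemma ps3_coeff_monom [simp]: "ps3_coeff (ps3_monom a b c) i j l = (if i = a \<and> j = b \<and> l = c then 1 else 0)"
  using ps3_coeff_monom_mult[of a b c 1 i j l] by auto

lemma ps3_const_numeral: "ps3_const (numeral n) = numeral n"
  by (simp add: ps3_const_def numeral_fps_const)

lemma ps3_const_inverse_mult: "(c::'a::field) \<noteq> 0 \<Longrightarrow> ps3_const (inverse c) * ps3_const c = 1"
  by (simp add: ps3_const_def)

section \<open>The map rho\<close>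

lemma sum3_atMost_shrink:
  assumes "n \<le> (I::nat)" "n \<le> J" "n \<le> L"
    and "\<And>i j l. n < i \<or> n < j \<or> n < l \<Longrightarrow> g i j l = (0::'b::comm_monoid_add)"
  shows "(\<Sum>i\<le>I. \<Sum>j\<le>J. \<Sum>l\<le>L. g i j l) = (\<Sum>i\<le>n. \<Sum>j\<le>n. \<Sum>l\<le>n. g i j l)"
proof -
  have sub: "{..n} \<subseteq> {..I}" "{..n} \<subseteq> {..J}" "{..n} \<subseteq> {..L}" using assms(1-3) by auto
  have "(\<Sum>i\<le>I. \<Sum>j\<le>J. \<Sum>l\<le>L. g i j l) = (\<Sum>i\<le>n. \<Sum>j\<le>J. \<Sum>l\<le>L. g i j l)"
    by (rule sum.mono_neutral_right[OF _ sub(1)]) (auto simp: assms(4) not_le)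
  also have "\<dots> = (\<Sum>i\<le>n. \<Sum>j\<le>n. \<Sum>l\<le>L. g i j l)"
    by (intro sum.cong refl sum.mono_neutral_right[OF _ sub(2)]) (auto simp: assms(4) not_le)
  also have "\<dots> = (\<Sum>i\<le>n. \<Sum>j\<le>n. \<Sum>l\<le>n. g i j l)"
    by (intro sum.cong refl sum.mono_neutral_right[OF _ sub(3)]) (auto simp: assms(4) not_le)
  finally show ?thesis .
qed

definition rho_monom :: "nat \<Rightarrow> nat \<Rightarrow> nat \<Rightarrow> 'a::comm_ring_1 fps" where
  "rho_monom i j l = (fps_X ^ 6 + fps_X ^ 31) ^ i * fps_X ^ (8 * j) * fps_X ^ (10 * l)"

lemma rho_monom_factor: "rho_monom i j l = fps_X ^ (6*i + 8*j + 10*l) * (1 + fps_X ^ 25) ^ i"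
proof -
  have "(fps_X ^ 6 + fps_X ^ 31 :: 'a fps) = fps_X ^ 6 * (1 + fps_X ^ 25)"
    by (simp add: algebra_simps flip: power_add)
  then show ?thesis
    by (simp add: rho_monom_def power_mult_distrib power_add mult_ac flip: power_mult)
qed

lemma rho_monom_nth_below: "n < 6*i + 8*j + 10*l \<Longrightarrow> fps_nth (rho_monom i j l) n = 0"
  by (simp add: rho_monom_factor fps_X_power_mult_nth)

lemma rho_monom_nth_order: "fps_nth (rho_monom i 0 0) (6 * i) = 1"
  by (simp add: rho_monom_factor fps_X_power_mult_nth fps_nth_power_0)

lemma rho_nth: "fps_nth (rho F) n = (\<Sum>i\<le>n. \<Sum>j\<le>n. \<Sum>l\<le>n. ps3_coeff F i j l * fps_nth (rho_monom i j l) n)"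
  by (simp add: rho_def rho_monom_def)

definition rho_trunc :: "nat \<Rightarrow> nat \<Rightarrow> nat \<Rightarrow> 'a::comm_ring_1 ps3 \<Rightarrow> 'a fps" where
  "rho_trunc I J L F = (\<Sum>i\<le>I. \<Sum>j\<le>J. \<Sum>l\<le>L. fps_const (ps3_coeff F i j l) * rho_monom i j l)"

lemma rho_nth_eq_trunc:
  assumes "n \<le> I" "n \<le> J" "n \<le> L"
  shows "fps_nth (rho F) n = fps_nth (rho_trunc I J L F) n"
proof -
  have "fps_nth (rho_trunc I J L F) n =
      (\<Sum>i\<le>I. \<Sum>j\<le>J. \<Sum>l\<le>L. ps3_coeff F i j l * fps_nth (rho_monom i j l) n)"
    by (simp add: rho_trunc_def fps_sum_nth)
  also have "\<dots> = fps_nth (rho F) n"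
    unfolding rho_nth using assms by (intro sum3_atMost_shrink) (auto simp: rho_monom_nth_below)
  finally show ?thesis ..
qed

lemma rho_trunc_X_mult: "rho_trunc (Suc I) J L (psX * A) = (fps_X ^ 6 + fps_X ^ 31) * rho_trunc I J L A"
proof -
  have "rho_trunc (Suc I) J L (psX * A) =
      (\<Sum>i\<le>I. \<Sum>j\<le>J. \<Sum>l\<le>L. fps_const (ps3_coeff A i j l) * rho_monom (Suc i) j l)"
    by (simp add: rho_trunc_def sum.atMost_Suc_shift del: sum.atMost_Suc)
  then show ?thesis
    by (simp add: rho_trunc_def sum_distrib_left rho_monom_def ac_simps)
qed

lemma rho_trunc_Y_mult: "rho_trunc I (Suc J) L (psY * A) = fps_X ^ 8 * rho_trunc I J L A"
proof -
  have "rho_trunc I (Suc J) L (psY * A) =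
      (\<Sum>i\<le>I. \<Sum>j\<le>J. \<Sum>l\<le>L. fps_const (ps3_coeff A i j l) * rho_monom i (Suc j) l)"
    by (simp add: rho_trunc_def sum.atMost_Suc_shift del: sum.atMost_Suc)
  then show ?thesis
    by (simp add: rho_trunc_def sum_distrib_left rho_monom_def power_add ac_simps)
qed

lemma rho_trunc_Z_mult: "rho_trunc I J (Suc L) (psZ * A) = fps_X ^ 10 * rho_trunc I J L A"
proof -
  have "rho_trunc I J (Suc L) (psZ * A) =
      (\<Sum>i\<le>I. \<Sum>j\<le>J. \<Sum>l\<le>L. fps_const (ps3_coeff A i j l) * rho_monom i j (Suc l))"
    by (simp add: rho_trunc_def sum.atMost_Suc_shift del: sum.atMost_Suc)
  then show ?thesis
    by (simp add: rho_trunc_def sum_distrib_left rho_monom_def power_add ac_simps)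
qed

lemma fps_mult_nth_cong:
  "(\<And>k. k \<le> n \<Longrightarrow> fps_nth f k = fps_nth g k) \<Longrightarrow> fps_nth (h * f) n = fps_nth (h * g) n"
  by (simp add: fps_mult_nth)

lemma rho_X_mult: "rho (psX * A) = (fps_X ^ 6 + fps_X ^ 31) * rho A"
proof (rule fps_ext)
  fix n
  have "fps_nth (rho (psX * A)) n = fps_nth ((fps_X ^ 6 + fps_X ^ 31) * rho_trunc n n n A) n"
    by (simp add: rho_nth_eq_trunc[of n "Suc n" n n] rho_trunc_X_mult)
  also have "\<dots> = fps_nth ((fps_X ^ 6 + fps_X ^ 31) * rho A) n"
    by (intro fps_mult_nth_cong) (simp add: rho_nth_eq_trunc)
  finally show "fps_nth (rho (psX * A)) n = fps_nth ((fps_X ^ 6 + fps_X ^ 31) * rho A) n" .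
qed

lemma rho_Y_mult: "rho (psY * A) = fps_X ^ 8 * rho A"
proof (rule fps_ext)
  fix n
  have "fps_nth (rho (psY * A)) n = fps_nth (fps_X ^ 8 * rho_trunc n n n A) n"
    by (simp add: rho_nth_eq_trunc[of n n "Suc n" n] rho_trunc_Y_mult)
  also have "\<dots> = fps_nth (fps_X ^ 8 * rho A) n"
    by (intro fps_mult_nth_cong) (simp add: rho_nth_eq_trunc)
  finally show "fps_nth (rho (psY * A)) n = fps_nth (fps_X ^ 8 * rho A) n" .
qed

lemma rho_Z_mult: "rho (psZ * A) = fps_X ^ 10 * rho A"
proof (rule fps_ext)
  fix n
  have "fps_nth (rho (psZ * A)) n = fps_nth (fps_X ^ 10 * rho_trunc n n n A) n"
    by (simp add: rho_nth_eq_trunc[of n n n "Suc n"] rho_trunc_Z_mult)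
  also have "\<dots> = fps_nth (fps_X ^ 10 * rho A) n"
    by (intro fps_mult_nth_cong) (simp add: rho_nth_eq_trunc)
  finally show "fps_nth (rho (psZ * A)) n = fps_nth (fps_X ^ 10 * rho A) n" .
qed

lemma rho_add: "rho (A + B) = rho A + rho B"
  by (rule fps_ext) (simp add: rho_nth algebra_simps sum.distrib)

lemma rho_diff: "rho (A - B) = rho A - rho B"
  by (rule fps_ext) (simp add: rho_nth algebra_simps sum_subtractf)

lemma rho_0: "rho 0 = 0"
  by (rule fps_ext) (simp add: rho_nth)

lemma rho_sum: "rho (sum f S) = (\<Sum>k\<in>S. rho (f k))"
  by (induction S rule: infinite_finite_induct) (auto simp: rho_0 rho_add)

lemma rho_const_mult: "rho (ps3_const c * A) = fps_const c * rho A"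
  by (rule fps_ext) (simp add: rho_nth sum_distrib_left mult.assoc)

definition x_series :: "'a::comm_ring_1 fps \<Rightarrow> 'a ps3" where
  "x_series a = fps_const (fps_const a)"

lemma ps3_coeff_x_series: "ps3_coeff (x_series a) i j l = (if j = 0 \<and> l = 0 then fps_nth a i else 0)"
  by (simp add: x_series_def ps3_coeff_def)

lemma rho_x_series_nth: "fps_nth (rho (x_series a)) n = (\<Sum>i\<le>n. fps_nth a i * fps_nth (rho_monom i 0 0) n)"
proof -
  have "(\<Sum>l\<le>n. ps3_coeff (x_series a) i j l * fps_nth (rho_monom i j l) n) =
      (if j = 0 then fps_nth a i * fps_nth (rho_monom i 0 0) n else 0)" for i j
    by (cases "j = 0") (simp_all add: ps3_coeff_x_series if_distrib[of "\<lambda>x. x * _"] sum.delta cong: if_cong)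
  then show ?thesis by (simp add: rho_nth sum.delta)
qed

lemma rho_1: "rho 1 = 1"
proof (rule fps_ext)
  fix n
  have "fps_nth (rho (x_series 1)) n = fps_nth (rho_monom 0 0 0) n"
    by (simp add: rho_x_series_nth if_distrib[of "\<lambda>x. x * _"] sum.delta cong: if_cong)
  then show "fps_nth (rho 1) n = fps_nth 1 n" by (simp add: x_series_def rho_monom_def)
qed

text \<open>Multiplicativity of rho is only needed on polynomials: the q with rho (A * q) = rho A * rho q
  for all A form a subring containing x, y, z and the constants.\<close>

definition rho_multiplier :: "'a::comm_ring_1 ps3 \<Rightarrow> bool" where
  "rho_multiplier q \<longleftrightarrow> (\<forall>A. rho (A * q) = rho A * rho q)"

lemma rho_mult: "rho_multiplier q \<Longrightarrow> rho (A * q) = rho A * rho q"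
  by (simp add: rho_multiplier_def)

lemma rho_multiplierI:
  assumes "\<And>A. rho (q * A) = r * rho A"
  shows "rho_multiplier q"
  unfolding rho_multiplier_def
  using assms[of A for A] assms[of 1] by (simp add: rho_1 mult.commute)

lemma rho_multiplier_basic [simp]:
  "rho_multiplier psX" "rho_multiplier psY" "rho_multiplier psZ" "rho_multiplier (ps3_const c)"
  by (rule rho_multiplierI, rule rho_X_mult rho_Y_mult rho_Z_mult rho_const_mult)+

lemma rho_multiplier_numeral [simp]: "rho_multiplier (numeral n)"
  using rho_multiplier_basic(4)[of "numeral n"] by (simp add: ps3_const_numeral)

lemma rho_multiplier_1 [simp]: "rho_multiplier 1"
  by (simp add: rho_multiplier_def rho_1)

lemma rho_multiplier_add [simp]: "rho_multiplier p \<Longrightarrow> rho_multiplier q \<Longrightarrow> rho_multiplier (p + q)"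
  by (simp add: rho_multiplier_def distrib_left rho_add)

lemma rho_multiplier_diff [simp]: "rho_multiplier p \<Longrightarrow> rho_multiplier q \<Longrightarrow> rho_multiplier (p - q)"
  by (simp add: rho_multiplier_def right_diff_distrib rho_diff)

lemma rho_multiplier_mult [simp]: "rho_multiplier p \<Longrightarrow> rho_multiplier q \<Longrightarrow> rho_multiplier (p * q)"
  by (simp add: rho_multiplier_def flip: mult.assoc)

lemma rho_multiplier_power [simp]: "rho_multiplier p \<Longrightarrow> rho_multiplier (p ^ k)"
  by (induction k) auto

lemma rho_power: "rho_multiplier p \<Longrightarrow> rho (p ^ k) = rho p ^ k"
  by (induction k) (simp_all add: rho_1 rho_mult mult.commute)

lemma rho_generators:
  "rho psX = fps_X ^ 6 + fps_X ^ 31" "rho psY = fps_X ^ 8" "rho psZ = fps_X ^ 10"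
  "rho (numeral n) = numeral n"
  using rho_X_mult[of 1] rho_Y_mult[of 1] rho_Z_mult[of 1] rho_const_mult[of "numeral n" 1]
  by (simp_all add: rho_1 ps3_const_numeral numeral_fps_const)

lemmas rho_polynomial_simps = rho_add rho_diff rho_mult rho_power rho_generators rho_1

lemma rho_f1: "rho f1 = 0"
  unfolding f1_def by (simp add: rho_polynomial_simps)
    (simp add: algebra_simps power2_eq_square power3_eq_cube power4_eq_xxxx flip: power_add)

lemma rho_f2: "rho f2 = 0"
  unfolding f2_def by (simp add: rho_polynomial_simps)
    (simp add: algebra_simps power2_eq_square power3_eq_cube flip: power_add)

lemma rho_f3: "rho f3 = 0"
  unfolding f3_def by (simp add: rho_polynomial_simps)
    (simp add: algebra_simps power2_eq_square power3_eq_cube flip: power_add)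

lemma rho_f4: "rho f4 = 0"
  unfolding f4_def by (simp add: rho_polynomial_simps)
    (simp add: algebra_simps power2_eq_square power3_eq_cube flip: power_add)

section \<open>A normal form modulo the generators\<close>

definition cong_xpow :: "nat \<Rightarrow> 'a::comm_ring_1 ps3 \<Rightarrow> 'a ps3 \<Rightarrow> bool" where
  "cong_xpow n A B \<longleftrightarrow> (\<forall>i<n. \<forall>j l. ps3_coeff A i j l = ps3_coeff B i j l)"

lemma cong_xpow_trans: "cong_xpow n A B \<Longrightarrow> cong_xpow n B C \<Longrightarrow> cong_xpow n A C"
  by (simp add: cong_xpow_def)

lemma cong_xpow_mult_right: "cong_xpow n A B \<Longrightarrow> cong_xpow n (A * C) (B * C)"
  unfolding cong_xpow_def ps3_coeff_mult by (auto intro!: sum.cong)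

lemma cong_xpow_add_X_power: "cong_xpow n (A + psX ^ n * B) A"
  by (simp add: cong_xpow_def)

lemma eq_if_cong_xpow: "(\<And>n. cong_xpow n A B) \<Longrightarrow> A = B"
  unfolding cong_xpow_def by (rule ps3_eqI) blast

text \<open>The x-adic limit of the partial sums of \<open>\<Sum>k. x\<^sup>k * H k\<close>.\<close>

definition x_adic_sum :: "(nat \<Rightarrow> 'a::comm_ring_1 ps3) \<Rightarrow> 'a ps3" where
  "x_adic_sum H = ps3_of_coeffs (\<lambda>i j l. \<Sum>k\<le>i. ps3_coeff (H k) (i - k) j l)"

lemma cong_xpow_x_adic_sum: "cong_xpow n (\<Sum>k<n. psX ^ k * H k) (x_adic_sum H)"
  unfolding cong_xpow_def
proof (intro allI impI)
  fix i j l assume "i < n"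
  have "ps3_coeff (\<Sum>k<n. psX ^ k * H k) i j l = (\<Sum>k<n. if k \<le> i then ps3_coeff (H k) (i - k) j l else 0)"
    by (simp add: ps3_coeff_sum)
  also have "\<dots> = (\<Sum>k\<in>{..<n} \<inter> {k. k \<le> i}. ps3_coeff (H k) (i - k) j l)"
    by (simp add: sum.inter_restrict)
  also have "{..<n} \<inter> {k. k \<le> i} = {..i}" using \<open>i < n\<close> by auto
  finally show "ps3_coeff (\<Sum>k<n. psX ^ k * H k) i j l = ps3_coeff (x_adic_sum H) i j l"
    by (simp add: x_adic_sum_def)
qed

lemma x_adic_sum_add: "x_adic_sum (\<lambda>k. H k + K k) = x_adic_sum H + x_adic_sum K"
  by (rule ps3_eqI) (simp add: x_adic_sum_def sum.distrib)

lemma x_adic_sum_sum: "x_adic_sum (\<lambda>k. \<Sum>m\<in>M. H k m) = (\<Sum>m\<in>M. x_adic_sum (\<lambda>k. H k m))"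
  by (rule ps3_eqI) (simp add: x_adic_sum_def ps3_coeff_sum sum.swap[of _ M])

lemma x_adic_sum_mult_right: "x_adic_sum (\<lambda>k. H k * G) = x_adic_sum H * G"
proof (rule eq_if_cong_xpow)
  fix n
  have "(\<Sum>k<n. psX ^ k * (H k * G)) = (\<Sum>k<n. psX ^ k * H k) * G"
    by (simp add: sum_distrib_right mult.assoc)
  then have "cong_xpow n (x_adic_sum (\<lambda>k. H k * G)) ((\<Sum>k<n. psX ^ k * H k) * G)"
    using cong_xpow_x_adic_sum[of n "\<lambda>k. H k * G"] by (simp add: cong_xpow_def)
  then show "cong_xpow n (x_adic_sum (\<lambda>k. H k * G)) (x_adic_sum H * G)"
    using cong_xpow_trans cong_xpow_mult_right cong_xpow_x_adic_sum by blast
qed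

lemma x_adic_sum_const: "x_adic_sum (\<lambda>k. ps3_const (c k)) = x_series (Abs_fps c)"
proof (rule ps3_eqI)
  fix i j l
  have "ps3_coeff (x_adic_sum (\<lambda>k. ps3_const (c k))) i j l =
      (\<Sum>k\<le>i. if k = i then (if j = 0 \<and> l = 0 then c i else 0) else 0)"
    unfolding x_adic_sum_def ps3_coeff_of_coeffs
    by (intro sum.cong refl) (auto simp: ps3_coeff_const)
  then show "ps3_coeff (x_adic_sum (\<lambda>k. ps3_const (c k))) i j l = ps3_coeff (x_series (Abs_fps c)) i j l"
    by (simp add: ps3_coeff_x_series)
qed

lemma x_adic_expansion:
  assumes step: "\<And>F. F = S F + psX * R F"
  shows "F = x_adic_sum (\<lambda>k. S ((R ^^ k) F))"
proof (rule eq_if_cong_xpow)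
  fix n
  have partial: "F = (\<Sum>k<n. psX ^ k * S ((R ^^ k) F)) + psX ^ n * (R ^^ n) F"
  proof (induction n)
    case (Suc n)
    have "psX ^ n * (R ^^ n) F = psX ^ n * (S ((R ^^ n) F) + psX * R ((R ^^ n) F))"
      using step[of "(R ^^ n) F"] by (rule arg_cong)
    then have "psX ^ n * (R ^^ n) F = psX ^ n * S ((R ^^ n) F) + psX ^ Suc n * (R ^^ Suc n) F"
      by (simp add: algebra_simps)
    with Suc show ?case by (simp add: algebra_simps)
  qed simp
  have "cong_xpow n F (\<Sum>k<n. psX ^ k * S ((R ^^ k) F))"
    by (subst partial) (rule cong_xpow_add_X_power)
  then show "cong_xpow n F (x_adic_sum (\<lambda>k. S ((R ^^ k) F)))"
    using cong_xpow_x_adic_sum by (rule cong_xpow_trans)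
qed

lemma ps3_decompose_mod_x:
  obtains R1 R2 R3 R4 R where
    "F = ps3_const (ps3_coeff F 0 0 0) + psY * ps3_const (ps3_coeff F 0 1 0)
       + psZ * ps3_const (ps3_coeff F 0 0 1) + psY ^ 2 * ps3_const (ps3_coeff F 0 2 0)
       + psY * psZ * ps3_const (ps3_coeff F 0 1 1) + psZ ^ 2 * ps3_const (ps3_coeff F 0 0 2)
       + psY ^ 3 * R1 + psY ^ 2 * psZ * R2 + psY * psZ ^ 2 * R3 + psZ ^ 3 * R4 + psX * R"
proof
  show "F = ps3_const (ps3_coeff F 0 0 0) + psY * ps3_const (ps3_coeff F 0 1 0)
       + psZ * ps3_const (ps3_coeff F 0 0 1) + psY ^ 2 * ps3_const (ps3_coeff F 0 2 0)
       + psY * psZ * ps3_const (ps3_coeff F 0 1 1) + psZ ^ 2 * ps3_const (ps3_coeff F 0 0 2)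
       + psY ^ 3 * ps3_of_coeffs (\<lambda>i j l. if i = 0 then ps3_coeff F 0 (j + 3) l else 0)
       + psY ^ 2 * psZ * ps3_of_coeffs (\<lambda>i j l. if i = 0 \<and> j = 0 then ps3_coeff F 0 2 (l + 1) else 0)
       + psY * psZ ^ 2 * ps3_of_coeffs (\<lambda>i j l. if i = 0 \<and> j = 0 then ps3_coeff F 0 1 (l + 2) else 0)
       + psZ ^ 3 * ps3_of_coeffs (\<lambda>i j l. if i = 0 \<and> j = 0 then ps3_coeff F 0 0 (l + 3) else 0)
       + psX * ps3_of_coeffs (\<lambda>i j l. ps3_coeff F (Suc i) j l)"
    by (rule ps3_eqI) (auto simp: mult.assoc ps3_coeff_const numeral_eq_Suc le_Suc_eq not_le Suc_diff_Suc)
qed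

definition monom_geometric :: "nat \<Rightarrow> nat \<Rightarrow> 'a::comm_ring_1 ps3" where
  "monom_geometric b c = ps3_of_coeffs (\<lambda>i j l. if i = 0 \<and> c dvd l \<and> j = b * (l div c) then 1 else 0)"

lemma one_minus_monom_mult_geometric:
  assumes "0 < c"
  shows "(1 - ps3_monom 0 b c) * monom_geometric b c = 1"
proof (rule ps3_eqI)
  fix i j l
  have "c \<le> l \<Longrightarrow> c dvd (l - c) \<longleftrightarrow> c dvd l" by (metis dvd_add_triv_right_iff le_add_diff_inverse2)
  moreover have "c \<le> l \<Longrightarrow> (l - c) div c = l div c - 1"
    using le_div_geq[OF assms] by simp
  moreover have "c dvd l \<Longrightarrow> l < c \<longleftrightarrow> l = 0" using assms by (auto dest: dvd_imp_le)
  ultimately show "ps3_coeff ((1 - ps3_monom 0 b c) * monom_geometric b c) i j l = ps3_coeff 1 i j l"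
    using assms
    by (auto simp: algebra_simps ps3_coeff_monom_mult monom_geometric_def div_le_mono)
qed

lemma two_three_neq_0: "(6::'a::idom) \<noteq> 0 \<Longrightarrow> (2::'a) \<noteq> 0 \<and> (3::'a) \<noteq> 0"
  by (metis mult_zero_left mult_zero_right numeral_times_numeral semiring_norm(12,13,14))

lemma mult_eq_of_unit_multiple:
  fixes f u m x E v R :: "'a::comm_ring_1"
  assumes "f = u * m + x * E" and "v * u = 1"
  shows "m * R = (v * R) * f + x * (- (v * R * E))"
proof -
  have "(v * R) * f = (v * u) * m * R + x * (v * R * E)"
    using assms(1) by (simp add: algebra_simps)
  with assms(2) show ?thesis by simp
qed

lemma cubic_monomials_mod_x:
  fixes R :: "'a::field ps3"
  assumes "(6::'a) \<noteq> 0"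
  shows "\<exists>G E. psY ^ 3 * R = G * f1 + psX * E"
    and "\<exists>G E. psY ^ 2 * psZ * R = G * f2 + psX * E"
    and "\<exists>G E. psY * psZ ^ 2 * R = G * f3 + psX * E"
    and "\<exists>G E. psZ ^ 3 * R = G * f4 + psX * E"
proof -
  from assms have inv: "ps3_const (inverse 2) * (2::'a ps3) = 1" "ps3_const (inverse 3) * (3::'a ps3) = 1"
    using two_three_neq_0 ps3_const_inverse_mult[of "2::'a"] ps3_const_inverse_mult[of "3::'a"]
    by (auto simp: ps3_const_numeral)
  define u1 u2 :: "'a ps3" where "u1 = 1 - ps3_monom 0 0 5" and "u2 = 1 - ps3_monom 0 5 1"
  define v1 v2 :: "'a ps3" where "v1 = monom_geometric 0 5" and "v2 = monom_geometric 5 1"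
  have geom: "v1 * u1 = 1" "v2 * u2 = 1"
    using one_minus_monom_mult_geometric[of 5 0] one_minus_monom_mult_geometric[of 1 5]
    by (simp_all add: u1_def u2_def v1_def v2_def mult.commute)
  have "(ps3_const (inverse 3) * v1) * (3 * u1) = (ps3_const (inverse 3) * 3) * (v1 * u1)"
    "(ps3_const (inverse 2) * v2) * (2 * u2) = (ps3_const (inverse 2) * 2) * (v2 * u2)"
    by (simp_all only: ac_simps)
  with inv geom have units: "(ps3_const (inverse 3) * v1) * (3 * u1) = 1"
    "(ps3_const (inverse 2) * v2) * (2 * u2) = 1" "v2 * u2 = 1"
    by simp_all
  have "f1 = (3 * u1) * psY ^ 3 + psX * (- 4*psY*psZ + psX^3 - 2*psY^6*psZ^2 - psX*psY^4*psZ^3)"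
    by (simp add: f1_def u1_def ps3_monom_def algebra_simps numeral_eq_Suc)
  from mult_eq_of_unit_multiple[OF this units(1)] show "\<exists>G E. psY ^ 3 * R = G * f1 + psX * E"
    by blast
  have "f2 = (2 * u2) * (psY ^ 2 * psZ) + psX * (- 3*psZ^2 + psX^2*psY - psY^5*psZ^3)"
    by (simp add: f2_def u2_def ps3_monom_def algebra_simps numeral_eq_Suc)
  from mult_eq_of_unit_multiple[OF this units(2)] show "\<exists>G E. psY ^ 2 * psZ * R = G * f2 + psX * E"
    by blast
  have "f3 = u2 * (psY * psZ ^ 2) + psX * (- 3*psX*psY^2 + 2*psX^2*psZ - 2*psY^4*psZ^4)"
    by (simp add: f3_def u2_def ps3_monom_def algebra_simps numeral_eq_Suc)
  from mult_eq_of_unit_multiple[OF this units(3)] show "\<exists>G E. psY * psZ ^ 2 * R = G * f3 + psX * E"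
    by blast
  have "f4 = u2 * psZ ^ 3 + psX * (- 2*psY^3 + psX*psY*psZ)"
    by (simp add: f4_def u2_def ps3_monom_def algebra_simps numeral_eq_Suc)
  from mult_eq_of_unit_multiple[OF this units(3)] show "\<exists>G E. psZ ^ 3 * R = G * f4 + psX * E"
    by blast
qed

definition quot_basis :: "'a::comm_ring_1 ps3 list" where
  "quot_basis = [1, psY, psZ, psY ^ 2 - psX * psZ, psY * psZ - psX ^ 3, psZ ^ 2 - psX ^ 2 * psY]"

lemma division_step:
  fixes F :: "'a::field ps3"
  assumes "(6::'a) \<noteq> 0"
  obtains G c R where
    "F = (\<Sum>m<4. G m * [f1, f2, f3, f4] ! m) + (\<Sum>m<6. ps3_const (c m) * quot_basis ! m) + psX * R"
proof -
  obtain R1 R2 R3 R4 R where F: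
    "F = ps3_const (ps3_coeff F 0 0 0) + psY * ps3_const (ps3_coeff F 0 1 0)
       + psZ * ps3_const (ps3_coeff F 0 0 1) + psY ^ 2 * ps3_const (ps3_coeff F 0 2 0)
       + psY * psZ * ps3_const (ps3_coeff F 0 1 1) + psZ ^ 2 * ps3_const (ps3_coeff F 0 0 2)
       + psY ^ 3 * R1 + psY ^ 2 * psZ * R2 + psY * psZ ^ 2 * R3 + psZ ^ 3 * R4 + psX * R"
    by (rule ps3_decompose_mod_x)
  obtain G1 G2 G3 G4 E1 E2 E3 E4 where cubic:
    "psY ^ 3 * R1 = G1 * f1 + psX * E1" "psY ^ 2 * psZ * R2 = G2 * f2 + psX * E2"
    "psY * psZ ^ 2 * R3 = G3 * f3 + psX * E3" "psZ ^ 3 * R4 = G4 * f4 + psX * E4"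
    using cubic_monomials_mod_x[OF assms] by metis
  define c where "c = (\<lambda>m. [ps3_coeff F 0 0 0, ps3_coeff F 0 1 0, ps3_coeff F 0 0 1,
      ps3_coeff F 0 2 0, ps3_coeff F 0 1 1, ps3_coeff F 0 0 2] ! m)"
  show ?thesis
  proof
    from F show "F = (\<Sum>m<4. [G1, G2, G3, G4] ! m * [f1, f2, f3, f4] ! m)
      + (\<Sum>m<6. ps3_const (c m) * quot_basis ! m)
      + psX * (R + E1 + E2 + E3 + E4
               + psZ * ps3_const (c 3) + psX ^ 2 * ps3_const (c 4) + psX * psY * ps3_const (c 5))"
      unfolding cubic by (simp add: c_def quot_basis_def eval_nat_numeral algebra_simps)
  qed
qed

lemma ps3_normal_form:
  fixes F :: "'a::field ps3"
  assumes "(6::'a) \<noteq> 0"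
  obtains G a where
    "F = (\<Sum>m<4. G m * [f1, f2, f3, f4] ! m) + (\<Sum>m<6. x_series (a m) * quot_basis ! m)"
proof -
  have "\<forall>F. \<exists>G c R. F = (\<Sum>m<4. G m * [f1, f2, f3, f4] ! m)
      + (\<Sum>m<6. ps3_const (c m) * quot_basis ! m) + psX * (R :: 'a ps3)"
    using division_step[OF assms] by blast
  then obtain G c R where step: "\<forall>F :: 'a ps3. F = (\<Sum>m<4. G F m * [f1, f2, f3, f4] ! m)
      + (\<Sum>m<6. ps3_const (c F m) * quot_basis ! m) + psX * R F"
    by (auto dest!: choice)
  define S where "S F = (\<Sum>m<4. G F m * [f1, f2, f3, f4] ! m)
      + (\<Sum>m<6. ps3_const (c F m) * quot_basis ! m)" for F
  have "F = x_adic_sum (\<lambda>k. S ((R ^^ k) F))"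
    by (rule x_adic_expansion) (unfold S_def, rule step[rule_format])
  also have "\<dots> = (\<Sum>m<4. x_adic_sum (\<lambda>k. G ((R ^^ k) F) m) * [f1, f2, f3, f4] ! m)
      + (\<Sum>m<6. x_series (Abs_fps (\<lambda>k. c ((R ^^ k) F) m)) * quot_basis ! m)"
    by (simp add: S_def x_adic_sum_add x_adic_sum_sum x_adic_sum_mult_right x_adic_sum_const)
  finally show ?thesis by (rule that)
qed

section \<open>Injectivity of rho on the complement\<close>

lemma fps_sum_neq_0_if_distinct_subdegree:
  fixes t :: "'i \<Rightarrow> 'a::comm_ring_1 fps"
  assumes "finite M" "M \<noteq> {}" and nz: "\<And>m. m \<in> M \<Longrightarrow> t m \<noteq> 0"
    and inj: "inj_on (\<lambda>m. subdegree (t m)) M"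
  shows "sum t M \<noteq> 0"
proof -
  define D where "D = (\<lambda>m. subdegree (t m)) ` M"
  have "Min D \<in> D" using assms(1,2) by (simp add: D_def)
  then obtain m0 where m0: "m0 \<in> M" and m0_min: "subdegree (t m0) = Min D" by (auto simp: D_def)
  have min: "subdegree (t m0) \<le> subdegree (t m)" if "m \<in> M" for m
    using assms(1) that by (simp add: m0_min D_def)
  let ?d = "subdegree (t m0)"
  have "fps_nth (t m) ?d = 0" if "m \<in> M" "m \<noteq> m0" for m
  proof -
    have "?d \<noteq> subdegree (t m)" using inj m0 that by (auto dest: inj_onD)
    with min[OF that(1)] show ?thesis by (simp add: nth_less_subdegree_zero)
  qed
  then have "fps_nth (sum t M) ?d = fps_nth (t m0) ?d"
    using assms(1) m0 by (simp add: fps_sum_nth sum.remove)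
  with nz[OF m0] show ?thesis by auto
qed

lemma rho_x_series:
  fixes a :: "'a::comm_ring_1 fps"
  assumes "a \<noteq> 0"
  shows "rho (x_series a) \<noteq> 0 \<and> subdegree (rho (x_series a)) = 6 * subdegree a"
proof -
  let ?s = "subdegree a"
  have term0: "fps_nth a i * fps_nth (rho_monom i 0 0) n = 0" if "n < 6 * ?s \<or> (n = 6 * ?s \<and> i \<noteq> ?s)" for i n
  proof (cases "i < ?s")
    case False
    with that have "n < 6 * i + 8 * 0 + 10 * 0" by auto
    then show ?thesis by (simp add: rho_monom_nth_below)
  qed (simp add: nth_less_subdegree_zero)
  have "fps_nth (rho (x_series a)) (6 * ?s) = (\<Sum>i\<le>6 * ?s. if i = ?s then fps_nth a ?s else 0)"
    unfolding rho_x_series_nth by (intro sum.cong refl) (auto simp: term0 rho_monom_nth_order)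
  then have "fps_nth (rho (x_series a)) (6 * ?s) = fps_nth a ?s"
    by simp
  moreover have "fps_nth (rho (x_series a)) n = 0" if "n < 6 * ?s" for n
    using that by (simp add: rho_x_series_nth term0)
  ultimately show ?thesis
    using assms by (metis fps_zero_nth nth_subdegree_nonzero subdegreeI)
qed

lemma rho_multiplier_quot_basis: "q \<in> set quot_basis \<Longrightarrow> rho_multiplier q"
  by (auto simp: quot_basis_def)

lemma rho_quot_basis:
  "map rho quot_basis = [1, fps_X ^ 8, fps_X ^ 10, - (fps_X ^ 41),
     - (3 * fps_X ^ 43 + 3 * fps_X ^ 68 + fps_X ^ 93), - (2 * fps_X ^ 45 + fps_X ^ 70)]"
  by (simp add: quot_basis_def rho_polynomial_simps)
    (simp add: algebra_simps power2_eq_square power3_eq_cube flip: power_add)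

lemma rho_quot_basis_subdegree:
  fixes m :: nat
  assumes "(6::'a::field) \<noteq> 0" and "m < 6"
  shows "rho (quot_basis ! m :: 'a ps3) \<noteq> 0
    \<and> subdegree (rho (quot_basis ! m :: 'a ps3)) = [0, 8, 10, 41, 43, 45] ! m"
proof -
  define r :: "'a fps" where "r = rho (quot_basis ! m)"
  define e where "e = [0, 8, 10, 41, 43, 45 :: nat] ! m"
  have "fps_nth r e \<noteq> 0 \<and> (\<forall>i<e. fps_nth r i = 0)"
  proof -
    have "length (quot_basis :: 'a ps3 list) = 6" by (simp add: quot_basis_def)
    then have r: "r = map rho quot_basis ! m"
      using \<open>m < 6\<close> by (simp add: r_def)
    from \<open>m < 6\<close> consider "m = 0" | "m = 1" | "m = 2" | "m = 3" | "m = 4" | "m = 5" by linarith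
    then show ?thesis
      using two_three_neq_0[OF assms(1)]
      by cases (simp_all add: r e_def rho_quot_basis numeral_fps_const)
  qed
  then show ?thesis
    unfolding r_def e_def by (metis fps_zero_nth subdegreeI)
qed

lemma rho_quot_basis_span_eq_0:
  fixes a :: "nat \<Rightarrow> 'a::field fps"
  assumes "(6::'a) \<noteq> 0" and "rho (\<Sum>m<6. x_series (a m) * quot_basis ! m) = 0"
  shows "(\<Sum>m<6. x_series (a m) * quot_basis ! m) = 0"
proof -
  define t where "t m = rho (x_series (a m) * quot_basis ! m)" for m
  define M where "M = {m. m < 6 \<and> a m \<noteq> 0}"
  have t_nz: "t m \<noteq> 0 \<and> subdegree (t m) = 6 * subdegree (a m) + [0, 8, 10, 41, 43, 45] ! m"
    if "m \<in> M" for m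
  proof -
    have m: "m < 6" "a m \<noteq> 0" using that by (auto simp: M_def)
    then have "rho_multiplier (quot_basis ! m :: 'a ps3)"
      by (intro rho_multiplier_quot_basis nth_mem) (simp add: quot_basis_def)
    then have "t m = rho (x_series (a m)) * rho (quot_basis ! m)"
      by (simp add: t_def rho_mult)
    with rho_x_series[OF m(2)] rho_quot_basis_subdegree[OF assms(1) m(1)] show ?thesis
      by simp
  qed
  have "sum t M = (\<Sum>m<6. t m)"
    by (rule sum.mono_neutral_left) (auto simp: M_def t_def x_series_def rho_0)
  also have "\<dots> = 0"
    using assms(2) by (simp add: t_def rho_sum)
  finally have "M = {}"
  proof (rule contrapos_pp)
    assume "M \<noteq> {}"
    let ?res = "map (\<lambda>e. e mod 6) [0, 8, 10, 41, 43, 45 :: nat]"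
    have "distinct ?res" by simp
    have "inj_on (\<lambda>m. subdegree (t m)) M"
    proof (rule inj_onI)
      fix m m' assume "m \<in> M" "m' \<in> M" and eq: "subdegree (t m) = subdegree (t m')"
      then have m: "m < 6" "m' < 6" by (auto simp: M_def)
      have "[0, 8, 10, 41, 43, 45 :: nat] ! m mod 6 = [0, 8, 10, 41, 43, 45] ! m' mod 6"
        using arg_cong[OF eq, of "\<lambda>x. x mod 6"] t_nz[OF \<open>m \<in> M\<close>] t_nz[OF \<open>m' \<in> M\<close>] by simp
      then have "?res ! m = ?res ! m'"
        using m by (simp del: list.map)
      moreover have "?res ! m = ?res ! m' \<longleftrightarrow> m = m'"
        using \<open>distinct ?res\<close> m by (intro nth_eq_iff_index_eq) simp_all
      ultimately show "m = m'" by simp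
    qed
    then show "sum t M \<noteq> 0"
      using \<open>M \<noteq> {}\<close> t_nz by (intro fps_sum_neq_0_if_distinct_subdegree) (auto simp: M_def)
  qed
  then show ?thesis by (auto simp: M_def x_series_def intro!: sum.neutral)
qed

lemma primeP_eq_gen_ideal:
  assumes "(6::'a::field) \<noteq> 0"
  shows "(primeP :: 'a ps3 set) = gen_ideal [f1, f2, f3, f4]"
proof
  have "rho_multiplier (f1 :: 'a ps3)" "rho_multiplier (f2 :: 'a ps3)"
    "rho_multiplier (f3 :: 'a ps3)" "rho_multiplier (f4 :: 'a ps3)"
    by (simp_all add: f1_def f2_def f3_def f4_def)
  then have rho_fs: "rho (\<Sum>m<4. G m * [f1, f2, f3, f4] ! m) = 0" for G :: "nat \<Rightarrow> 'a ps3"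
    by (simp add: rho_add rho_mult rho_f1 rho_f2 rho_f3 rho_f4 eval_nat_numeral)
  then show "gen_ideal [f1, f2, f3, f4] \<subseteq> (primeP :: 'a ps3 set)"
    by (auto simp: gen_ideal_def primeP_def numeral_eq_Suc)
  show "primeP \<subseteq> gen_ideal [f1, f2, f3, (f4 :: 'a ps3)]"
  proof
    fix F :: "'a ps3" assume "F \<in> primeP"
    obtain G a where F: "F = (\<Sum>m<4. G m * [f1, f2, f3, f4] ! m) + (\<Sum>m<6. x_series (a m) * quot_basis ! m)"
      using ps3_normal_form[OF assms] .
    with \<open>F \<in> primeP\<close> rho_fs[of G] have "rho (\<Sum>m<6. x_series (a m) * quot_basis ! m) = 0"
      by (simp add: primeP_def rho_add)
    with F have "F = (\<Sum>m<4. G m * [f1, f2, f3, f4] ! m)"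
      using rho_quot_basis_span_eq_0[OF assms] by simp
    then show "F \<in> gen_ideal [f1, f2, f3, f4]"
      by (auto simp: gen_ideal_def numeral_eq_Suc intro!: exI[of _ G])
  qed
qed

section \<open>Minimality of the generators\<close>

lemma det_mult_eq_0_if_inner_dim_less:
  fixes A B :: "'a::comm_ring_1 mat"
  assumes A: "A \<in> carrier_mat k m" and B: "B \<in> carrier_mat m k" and "m < k"
  shows "det (A * B) = 0"
proof -
  define A' where "A' = mat k k (\<lambda>(i, j). if j < m then A $$ (i, j) else 0)"
  define B' where "B' = mat k k (\<lambda>(i, j). if i < m then B $$ (i, j) else 0)"
  have carrier: "A' \<in> carrier_mat k k" "B' \<in> carrier_mat k k" by (simp_all add: A'_def B'_def)
  have "A * B = A' * B'"
  proof (rule eq_matI)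
    fix i j assume "i < dim_row (A' * B')" "j < dim_col (A' * B')"
    then have ij: "i < k" "j < k" by (simp_all add: A'_def B'_def)
    have "(A' * B') $$ (i, j) = (\<Sum>l\<in>{0..<k}. if l < m then A $$ (i, l) * B $$ (l, j) else 0)"
      using ij by (auto simp: A'_def B'_def scalar_prod_def intro!: sum.cong)
    also have "\<dots> = (\<Sum>l\<in>{0..<m}. A $$ (i, l) * B $$ (l, j))"
      using \<open>m < k\<close> by (intro sum.mono_neutral_cong_right) auto
    also have "\<dots> = (A * B) $$ (i, j)"
      using A B ij by (simp add: scalar_prod_def)
    finally show "(A * B) $$ (i, j) = (A' * B') $$ (i, j)" ..
  qed (use A B in \<open>simp_all add: A'_def B'_def\<close>)
  moreover have "det A' = 0"
  proof -
    have "(\<Prod>j<k. A' $$ (p j, j)) = 0" if "p permutes {0..<k}" for p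
      using that \<open>m < k\<close> by (intro prod_zero bexI[of _ "k - 1"]) (auto simp: A'_def permutes_in_image)
    then show ?thesis by (simp add: det_col[OF carrier(1)])
  qed
  ultimately show ?thesis by (simp add: det_mult[OF carrier])
qed

definition ps3_ord_ge :: "nat \<Rightarrow> 'a::comm_ring_1 ps3 \<Rightarrow> bool" where
  "ps3_ord_ge d F \<longleftrightarrow> (\<forall>i j l. i + j + l < d \<longrightarrow> ps3_coeff F i j l = 0)"

lemma ps3_ord_ge_mult: "ps3_ord_ge d B \<Longrightarrow> ps3_ord_ge d (A * B)"
  unfolding ps3_ord_ge_def ps3_coeff_mult by (auto intro!: sum.neutral)

lemma ps3_ord_ge_sum: "(\<And>k. k \<in> S \<Longrightarrow> ps3_ord_ge d (f k)) \<Longrightarrow> ps3_ord_ge d (sum f S)"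
  unfolding ps3_ord_ge_def ps3_coeff_sum by (auto intro!: sum.neutral)

lemma ps3_coeff_mult_ord_ge:
  assumes "ps3_ord_ge d B" and "i + j + l = d"
  shows "ps3_coeff (A * B) i j l = ps3_coeff A 0 0 0 * ps3_coeff B i j l"
proof -
  have vanish: "ps3_coeff B i' j' l' = 0" if "i' + j' + l' < i + j + l" for i' j' l'
    using assms that by (simp add: ps3_ord_ge_def)
  then have "ps3_coeff (A * B) i j l = (\<Sum>p\<le>l. \<Sum>q\<le>j. \<Sum>r\<le>i.
      if r = 0 then if q = 0 then if p = 0 then ps3_coeff A 0 0 0 * ps3_coeff B i j l else 0 else 0 else 0)"
    unfolding ps3_coeff_mult by (intro sum.cong refl) (auto simp: vanish)
  then show ?thesis by simp
qed

lemma mem_gen_ideal: "l < length gs \<Longrightarrow> gs ! l \<in> gen_ideal gs"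
  unfolding gen_ideal_def
  by (intro CollectI exI[of _ "\<lambda>k. if k = l then 1 else 0"])
    (simp add: if_distrib[of "\<lambda>x. x * _"] cong: if_cong)

lemma gen_ideal_ord_ge:
  "\<forall>g\<in>set gs. ps3_ord_ge d g \<Longrightarrow> F \<in> gen_ideal gs \<Longrightarrow> ps3_ord_ge d F"
  unfolding gen_ideal_def by (auto intro!: ps3_ord_ge_sum ps3_ord_ge_mult)

definition ps3_coeff_at :: "'a ps3 \<Rightarrow> nat \<times> nat \<times> nat \<Rightarrow> 'a" where
  "ps3_coeff_at F = (\<lambda>(i, j, l). ps3_coeff F i j l)"

text \<open>If all generators have order at least d, the degree-d coefficients of an ideal element are
  combinations of those of the generators, weighted by the constant terms of the cofactors.\<close>

lemma gen_ideal_length_ge: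
  fixes fs gs :: "'a::field ps3 list" and es :: "(nat \<times> nat \<times> nat) list"
  assumes fs: "set fs \<subseteq> gen_ideal gs" and ord: "\<forall>g\<in>set gs. ps3_ord_ge d g"
    and es: "\<forall>(i, j, l)\<in>set es. i + j + l = d" "length es = length fs"
    and det: "det (mat (length fs) (length fs) (\<lambda>(r, s). ps3_coeff_at (fs ! r) (es ! s))) \<noteq> 0"
  shows "length fs \<le> length gs"
proof (rule ccontr)
  assume "\<not> length fs \<le> length gs"
  then have less: "length gs < length fs" by simp
  have "\<forall>r. r < length fs \<longrightarrow> (\<exists>h. fs ! r = (\<Sum>l<length gs. h l * gs ! l))"
    using fs nth_mem unfolding gen_ideal_def by blast
  then obtain h where h: "\<forall>r. r < length fs \<longrightarrow> fs ! r = (\<Sum>l<length gs. h r l * gs ! l)"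
    unfolding choice_iff' by blast
  define C where "C = mat (length fs) (length gs) (\<lambda>(r, l). ps3_coeff (h r l) 0 0 0)"
  define W where "W = mat (length gs) (length fs) (\<lambda>(l, s). ps3_coeff_at (gs ! l) (es ! s))"
  have "ps3_coeff_at (fs ! r) (es ! s) = (\<Sum>l<length gs. ps3_coeff (h r l) 0 0 0 * ps3_coeff_at (gs ! l) (es ! s))"
    if "r < length fs" "s < length fs" for r s
  proof -
    obtain i j l where e: "es ! s = (i, j, l)" by (cases "es ! s") auto
    have "es ! s \<in> set es" using that es(2) by simp
    with es(1) e have deg: "i + j + l = d" by auto
    have "ps3_coeff (h r k * gs ! k) i j l = ps3_coeff (h r k) 0 0 0 * ps3_coeff (gs ! k) i j l"
      if "k < length gs" for k
      using ord that deg by (intro ps3_coeff_mult_ord_ge) auto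
    then show ?thesis
      using h that(1) e by (simp add: ps3_coeff_at_def ps3_coeff_sum)
  qed
  then have "mat (length fs) (length fs) (\<lambda>(r, s). ps3_coeff_at (fs ! r) (es ! s)) = C * W"
    by (intro eq_matI) (auto simp: C_def W_def scalar_prod_def atLeast0LessThan)
  moreover have "det (C * W) = 0"
    using less by (intro det_mult_eq_0_if_inner_dim_less) (auto simp: C_def W_def)
  ultimately show False using det by simp
qed

lemma ps3_coeff_numeral_mult [simp]:
  "ps3_coeff (numeral n * (A :: 'a::comm_ring_1 ps3)) i j l = numeral n * ps3_coeff A i j l"
  using ps3_coeff_const_mult[of "numeral n" A] by (simp add: ps3_const_numeral)

lemma f_monomials:
  "f1 = 3 * ps3_monom 0 3 0 - 4 * ps3_monom 1 1 1 + ps3_monom 4 0 0 - 3 * ps3_monom 0 3 5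
      - 2 * ps3_monom 1 6 2 - ps3_monom 2 4 3"
  "f2 = 2 * ps3_monom 0 2 1 - 3 * ps3_monom 1 0 2 + ps3_monom 3 1 0 - 2 * ps3_monom 0 7 2
      - ps3_monom 1 5 3"
  "f3 = ps3_monom 0 1 2 - 3 * ps3_monom 2 2 0 + 2 * ps3_monom 3 0 1 - ps3_monom 0 6 3
      - 2 * ps3_monom 1 4 4"
  "f4 = ps3_monom 0 0 3 - 2 * ps3_monom 1 3 0 + ps3_monom 2 1 1 - ps3_monom 0 5 4"
  by (simp_all add: f1_def f2_def f3_def f4_def ps3_monom_def algebra_simps)

lemma primeP_generators_length_ge:
  assumes "(6::'a::field) \<noteq> 0" and "(primeP :: 'a ps3 set) = gen_ideal gs"
  shows "4 \<le> length gs"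
proof -
  let ?fs = "[f1, f2, f3, f4 :: 'a ps3]" and ?es = "[(0, 3, 0), (0, 2, 1), (0, 1, 2), (0, 0, 3)]"
  have ideal: "gen_ideal gs = gen_ideal ?fs"
    using assms primeP_eq_gen_ideal by metis
  have "\<forall>f\<in>set ?fs. ps3_ord_ge 3 f"
    by (simp add: f_monomials ps3_ord_ge_def)
  then have "\<forall>g\<in>set gs. ps3_ord_ge 3 g"
    using ideal mem_gen_ideal gen_ideal_ord_ge by (metis in_set_conv_nth)
  moreover have "set ?fs \<subseteq> gen_ideal gs"
    using ideal mem_gen_ideal by (metis in_set_conv_nth subsetI)
  moreover have "det (mat 4 4 (\<lambda>(r, s). ps3_coeff_at (?fs ! r) (?es ! s))) = 6"
  proof -
    have "mat 4 4 (\<lambda>(r, s). ps3_coeff_at (?fs ! r) (?es ! s)) =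
        mat 4 4 (\<lambda>(r, s). if r = s then [3, 2, 1, 1] ! r else 0)"
      by (rule eq_matI) (auto simp: less_Suc_eq numeral_eq_Suc ps3_coeff_at_def f_monomials)
    also have "det \<dots> = 6"
      by (subst det_upper_triangular[of _ 4]) (auto simp: upper_triangular_def diag_mat_def upt_rec)
    finally show ?thesis .
  qed
  ultimately show ?thesis
    using gen_ideal_length_ge[of ?fs gs 3 ?es] assms(1) by (simp add: numeral_eq_Suc)
qed

lemma of_nat_neq_0_below_CHAR:
  assumes "0 < n" and "CHAR('a) = 0 \<or> n < CHAR('a)"
  shows "(of_nat n :: 'a::semiring_1) \<noteq> 0"
  using assms by (auto simp: of_nat_eq_0_iff_char_dvd dest: dvd_imp_le)

theorem mainTheorem5:
  assumes "CHAR('a::field) = 0 \<or> CHAR('a) \<ge> 5"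
  shows "(primeP :: 'a ps3 set) = gen_ideal [f1, f2, f3, f4]
         \<and> (\<forall>gs. length gs < 4 \<longrightarrow> (primeP :: 'a ps3 set) \<noteq> gen_ideal gs)
         \<and> mu (primeP :: 'a ps3 set) = 4"
proof -
  have "(2::'a) \<noteq> 0" "(3::'a) \<noteq> 0"
    using assms of_nat_neq_0_below_CHAR[of 2, where 'a='a] of_nat_neq_0_below_CHAR[of 3, where 'a='a]
    by auto
  moreover have "(6::'a) = 2 * 3" by simp
  ultimately have six: "(6::'a) \<noteq> 0" by (metis mult_eq_0_iff)
  have generated: "(primeP :: 'a ps3 set) = gen_ideal [f1, f2, f3, f4]"
    using primeP_eq_gen_ideal[OF six] .
  have minimal: "\<forall>gs. length gs < 4 \<longrightarrow> (primeP :: 'a ps3 set) \<noteq> gen_ideal gs"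
    using primeP_generators_length_ge[OF six] by fastforce
  have "mu (primeP :: 'a ps3 set) = 4"
    unfolding mu_def
  proof (rule Least_equality)
    show "\<exists>gs. length gs = 4 \<and> (primeP :: 'a ps3 set) = gen_ideal gs"
      using generated by force
  qed (use minimal in \<open>auto simp: not_less[symmetric]\<close>)
  with generated minimal show ?thesis by blast
qed

end
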